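(* Let $d\ge 1$ and $s\in(0,1/2)$. For all real numbers $r_0,r_1$, \[ (r_1^2 - r_1 r_0)\,\widetilde G_s(r_0) \;\ge\; F_s(r_1)-F_s(r_0). \]
   Context: For $\rho\in\mathbb{R}$ define $F_s(\rho) := \int_0^\rho \frac{\rho-r}{(1+r^2)^{(d+1+2s)/2}}\,dr$, $G_s(\rho) := \int_0^\rho (1+r^2)^{-(d+1+2s)/2}\,dr$ (so $G_s=F_s'$), and $\widetilde G_s(\rho) := \int_0^1 (1+\rho^2 r^2)^{-(d+1+2s)/2}\,dr$, so that $\rho\,\widetilde G_s(\rho)=G_s(\rho)$. *)

theory Defs
  imports "HOL-Analysis.Analysis"
begin

definition oint0 :: "(real \<Rightarrow> real) \<Rightarrow> real \<Rightarrow> real" where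
  "oint0 f \<rho> = (if 0 \<le> \<rho> then integral {0..\<rho>} f else - integral {\<rho>..0} f)"

definition expo :: "nat \<Rightarrow> real \<Rightarrow> real" where
  "expo d s = (real d + 1 + 2 * s) / 2"

definition F_s :: "nat \<Rightarrow> real \<Rightarrow> real \<Rightarrow> real" where
  "F_s d s \<rho> = oint0 (\<lambda>r. (\<rho> - r) / (1 + r\<^sup>2) powr expo d s) \<rho>"

definition G_s :: "nat \<Rightarrow> real \<Rightarrow> real \<Rightarrow> real" where
  "G_s d s \<rho> = oint0 (\<lambda>r. (1 + r\<^sup>2) powr (- expo d s)) \<rho>"

definition Gt_s :: "nat \<Rightarrow> real \<Rightarrow> real \<Rightarrow> real" where
  "Gt_s d s \<rho> = integral {0..1} (\<lambda>r. (1 + \<rho>\<^sup>2 * r\<^sup>2) powr (- expo d s))"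

end

theory Submission
  imports Defs
begin

text \<open>
Write \<open>w\<close> for the weight \<open>(1 + r\<^sup>2) powr -((d + 1 + 2s)/2)\<close>, so that \<open>G = G_s\<close> is the odd primitive
of \<open>w\<close>, \<open>F = F_s\<close> the even primitive of \<open>G\<close>, and \<open>g = Gt_s r\<^sub>0 = G r\<^sub>0 / r\<^sub>0\<close> is the mean of \<open>w\<close>
over \<open>[0, r\<^sub>0]\<close>. By evenness we may take \<open>r\<^sub>0 \<ge> 0\<close>. Then \<open>\<phi>(t) = g (t\<^sup>2 - t r\<^sub>0) - F t\<close> has
derivative \<open>g (2t - r\<^sub>0) - G t\<close>, which changes sign from \<open>-\<close> to \<open>+\<close> at \<open>r\<^sub>0\<close>: this only uses that
\<open>w\<close> is nonnegative and decreasing in \<open>|r|\<close>, i.e. that \<open>G\<close> is odd and concave on \<open>[0,\<infinity>)\<close>, so that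
it lies below its tangent at \<open>r\<^sub>0\<close> and above its chord over \<open>[0, r\<^sub>0]\<close>. Hence \<open>\<phi>\<close> is minimal at
\<open>r\<^sub>0\<close>, which is the claim.
\<close>

lemma DERIV_sign_change_imp_min:
  fixes f f' :: "real \<Rightarrow> real"
  assumes f': "\<And>x. (f has_real_derivative f' x) (at x)"
    and "\<And>x. x \<le> a \<Longrightarrow> f' x \<le> 0" and "\<And>x. a \<le> x \<Longrightarrow> 0 \<le> f' x"
  shows "f a \<le> f b"
proof (cases "a \<le> b")
  case True
  show ?thesis by (rule deriv_nonneg_imp_mono[OF f']) (use assms True in auto)
next
  case False
  show ?thesis by (rule deriv_nonpos_imp_antimono[OF f']) (use assms False in auto)
qed

lemma odd_primitive_of_even:
  fixes G w :: "real \<Rightarrow> real"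
  assumes G': "\<And>x. (G has_real_derivative w x) (at x)"
    and "\<And>x. w (- x) = w x" and "G 0 = 0"
  shows "G (- u) = - G u"
proof -
  have "((\<lambda>x. G x + G (- x)) has_real_derivative 0) (at x)" for x
    using DERIV_add[OF G' DERIV_chain2[OF G' DERIV_minus[OF DERIV_ident]]] assms(2) by simp
  from DERIV_isconst_all[OF allI[OF this], of u 0] show ?thesis
    using assms(3) by simp
qed

lemma even_primitive_of_odd:
  fixes F G :: "real \<Rightarrow> real"
  assumes F': "\<And>x. (F has_real_derivative G x) (at x)" and "\<And>x. G (- x) = - G x"
  shows "F (- u) = F u"
proof -
  have "((\<lambda>x. F x - F (- x)) has_real_derivative 0) (at x)" for x
    using DERIV_diff[OF F' DERIV_chain2[OF F' DERIV_minus[OF DERIV_ident]]] assms(2) by simp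
  from DERIV_isconst_all[OF allI[OF this], of "- u" u] show ?thesis by simp
qed

lemma concave_primitive_below_tangent:
  fixes G w :: "real \<Rightarrow> real"
  assumes G': "\<And>x. (G has_real_derivative w x) (at x)"
    and w_antimono: "\<And>x y. 0 \<le> x \<Longrightarrow> x \<le> y \<Longrightarrow> w y \<le> w x"
    and "0 \<le> a" and "0 \<le> u"
  shows "G u \<le> G a + w a * (u - a)"
proof -
  define h where "h x = G x - w a * x" for x
  have h': "(h has_real_derivative w x - w a) (at x)" for x
    unfolding h_def by (auto intro!: derivative_eq_intros G')
  have "h u \<le> h a"
  proof (cases "a \<le> u")
    case True
    show ?thesis
      by (rule deriv_nonpos_imp_antimono[OF h']) (use w_antimono \<open>0 \<le> a\<close> True in auto)
  next
    case False
    show ?thesis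
      by (rule deriv_nonneg_imp_mono[OF h']) (use w_antimono \<open>0 \<le> u\<close> False in auto)
  qed
  then show ?thesis unfolding h_def by (simp add: algebra_simps)
qed

lemma concave_primitive_above_chord:
  fixes G w :: "real \<Rightarrow> real"
  assumes G': "\<And>x. (G has_real_derivative w x) (at x)"
    and w_antimono: "\<And>x y. 0 \<le> x \<Longrightarrow> x \<le> y \<Longrightarrow> w y \<le> w x"
    and "G 0 = 0" and "G a = g * a" and "0 \<le> t" and "t \<le> a"
  shows "g * t \<le> G t"
proof -
  define h where "h x = G x - g * x" for x
  have h': "(h has_real_derivative w x - g) (at x)" for x
    unfolding h_def by (auto intro!: derivative_eq_intros G')
  \<comment> \<open>\<open>h' = w - g\<close> decreases on \<open>[0,\<infinity>)\<close>, so \<open>h\<close> increases on \<open>[0,t]\<close> or decreases on \<open>[t,a]\<close>.\<close>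
  have "0 \<le> h t"
  proof (cases "g \<le> w t")
    case True
    then have "h 0 \<le> h t"
      by (intro deriv_nonneg_imp_mono[OF h']) (use w_antimono \<open>0 \<le> t\<close> in force)+
    then show ?thesis using \<open>G 0 = 0\<close> by (simp add: h_def)
  next
    case False
    then have "h a \<le> h t"
      by (intro deriv_nonpos_imp_antimono[OF h']) (use w_antimono \<open>0 \<le> t\<close> \<open>t \<le> a\<close> in force)+
    then show ?thesis using \<open>G a = g * a\<close> by (simp add: h_def)
  qed
  then show ?thesis unfolding h_def by simp
qed

lemma concave_primitive_le_line_right:
  fixes G w :: "real \<Rightarrow> real"
  assumes G': "\<And>x. (G has_real_derivative w x) (at x)"
    and w_antimono: "\<And>x y. 0 \<le> x \<Longrightarrow> x \<le> y \<Longrightarrow> w y \<le> w x"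
    and "0 \<le> w a" and "0 \<le> a" and "w a \<le> g" and "G a = g * a" and "a \<le> x"
  shows "G x \<le> g * (2 * x - a)"
proof -
  have "G x \<le> g * a + w a * (x - a)"
    using concave_primitive_below_tangent[OF G' w_antimono \<open>0 \<le> a\<close>, of x] assms(4-7) by simp
  moreover have "w a * (x - a) \<le> g * (x - a)"
    using \<open>w a \<le> g\<close> \<open>a \<le> x\<close> by (simp add: mult_right_mono)
  moreover have "0 \<le> g * (x - a)"
    using assms(3,5,7) by simp
  ultimately show ?thesis by (simp add: algebra_simps)
qed

lemma odd_concave_primitive_ge_line_left:
  fixes G w :: "real \<Rightarrow> real"
  assumes G': "\<And>x. (G has_real_derivative w x) (at x)"
    and G_odd: "\<And>x. G (- x) = - G x"
    and w_antimono: "\<And>x y. 0 \<le> x \<Longrightarrow> x \<le> y \<Longrightarrow> w y \<le> w x"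
    and "0 \<le> w a" and "0 \<le> a" and "w a \<le> g" and "G a = g * a" and "x \<le> a"
  shows "g * (2 * x - a) \<le> G x"
proof -
  have "0 \<le> g" using assms(4,6) by linarith
  show ?thesis
  proof (cases "0 \<le> x")
    case True
    have "G 0 = - G 0" using G_odd[of 0] by simp
    then have G0: "G 0 = 0" by linarith
    have "g * x \<le> G x"
      by (rule concave_primitive_above_chord[OF G' w_antimono G0 \<open>G a = g * a\<close> True \<open>x \<le> a\<close>])
    moreover have "g * (x - a) \<le> 0" using \<open>0 \<le> g\<close> \<open>x \<le> a\<close> by (simp add: mult_nonneg_nonpos)
    ultimately show ?thesis by (simp add: algebra_simps)
  next
    case False
    have "G (- x) \<le> g * a + w a * (- x - a)"
      using concave_primitive_below_tangent[OF G' w_antimono \<open>0 \<le> a\<close>, of "- x"] assms(7) False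
      by simp
    also have "w a * (- x - a) \<le> w a * (- x)"
      using \<open>0 \<le> w a\<close> \<open>0 \<le> a\<close> by (intro mult_left_mono) auto
    also have "\<dots> \<le> g * (- x)"
      using \<open>w a \<le> g\<close> False by (intro mult_right_mono) auto
    finally have "- G x \<le> g * a - g * x"
      using G_odd[of x] by simp
    moreover have "g * x \<le> 0" using \<open>0 \<le> g\<close> False by (simp add: mult_nonneg_nonpos)
    ultimately show ?thesis by (simp add: algebra_simps)
  qed
qed

lemma second_primitive_le_quadratic:
  fixes F G w :: "real \<Rightarrow> real"
  assumes F': "\<And>x. (F has_real_derivative G x) (at x)"
    and G': "\<And>x. (G has_real_derivative w x) (at x)"
    and G_odd: "\<And>x. G (- x) = - G x"
    and w_nonneg: "\<And>x. 0 \<le> w x"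
    and w_antimono: "\<And>x y. 0 \<le> x \<Longrightarrow> x \<le> y \<Longrightarrow> w y \<le> w x"
    and "0 \<le> a" and "w a \<le> g" and "G a = g * a"
  shows "F b - F a \<le> g * (b\<^sup>2 - b * a)"
proof -
  define \<phi> where "\<phi> x = g * (x\<^sup>2 - x * a) - F x" for x
  have \<phi>': "(\<phi> has_real_derivative g * (2 * x - a) - G x) (at x)" for x
    unfolding \<phi>_def by (auto intro!: derivative_eq_intros F' simp: algebra_simps)
  have "\<phi> a \<le> \<phi> b"
    by (rule DERIV_sign_change_imp_min[OF \<phi>'])
      (use concave_primitive_le_line_right[OF G' w_antimono w_nonneg assms(6-8)]
        odd_concave_primitive_ge_line_left[OF G' G_odd w_antimono w_nonneg assms(6-8)] in auto)
  then show ?thesis unfolding \<phi>_def by (simp add: power2_eq_square algebra_simps)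
qed

lemma oint0_split:
  fixes f :: "real \<Rightarrow> real"
  assumes f: "continuous_on UNIV f" and "a \<le> x" and "a \<le> 0"
  shows "oint0 f x = integral {a..x} f - integral {a..0} f"
proof -
  have int: "f integrable_on {u..v}" for u v
    by (rule integrable_continuous_real) (rule continuous_on_subset[OF f], simp)
  show ?thesis
  proof (cases "0 \<le> x")
    case True
    then show ?thesis
      using Henstock_Kurzweil_Integration.integral_combine[OF \<open>a \<le> 0\<close> True int] by (simp add: oint0_def)
  next
    case False
    then show ?thesis
      using Henstock_Kurzweil_Integration.integral_combine[OF \<open>a \<le> x\<close> _ int, of 0] by (simp add: oint0_def)
  qed
qed

lemma oint0_has_real_derivative:
  fixes f :: "real \<Rightarrow> real"
  assumes f: "continuous_on UNIV f"
  shows "(oint0 f has_real_derivative f x) (at x)"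
proof -
  define a where "a = - \<bar>x\<bar> - 1"
  have "a < x" "a \<le> 0" unfolding a_def by linarith+
  have "((\<lambda>u. integral {a..u} f) has_vector_derivative f x) (at x within {a..x + 1})"
    by (rule integral_has_vector_derivative[OF continuous_on_subset[OF f]]) (use \<open>a < x\<close> in auto)
  moreover have "at x within {a..x + 1} = at x"
    by (rule at_within_interior) (use \<open>a < x\<close> in simp)
  ultimately have "((\<lambda>u. integral {a..u} f - integral {a..0} f) has_real_derivative f x) (at x)"
    by (auto simp: has_real_derivative_iff_has_vector_derivative intro!: derivative_eq_intros)
  then show ?thesis
  proof (rule has_field_derivative_transform_within_open[where S = "{a<..}"])
    show "integral {a..y} f - integral {a..0} f = oint0 f y" if "y \<in> {a<..}" for y
      using oint0_split[OF f _ \<open>a \<le> 0\<close>, of y] that by simp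
  qed (use \<open>a < x\<close> in auto)
qed

lemma oint0_zero [simp]: "oint0 f 0 = 0"
  by (simp add: oint0_def)

lemma oint0_cmult_diff:
  fixes f h :: "real \<Rightarrow> real"
  assumes "continuous_on UNIV f" and "continuous_on UNIV h"
  shows "oint0 (\<lambda>r. c * f r - h r) x = c * oint0 f x - oint0 h x"
proof -
  have f_int: "f integrable_on {u..v}" and h_int: "h integrable_on {u..v}" for u v
    by (rule integrable_continuous_real, rule continuous_on_subset[OF assms(1)], simp,
        rule integrable_continuous_real, rule continuous_on_subset[OF assms(2)], simp)
  have "integral {u..v} (\<lambda>r. c * f r - h r) = c * integral {u..v} f - integral {u..v} h"
    for u v using integral_diff[OF integrable_on_cmult_left[where c = c, OF f_int[of u v]] h_int[of u v]] by simp
  then show ?thesis by (simp add: oint0_def)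
qed

definition weight :: "real \<Rightarrow> real \<Rightarrow> real" where
  "weight e r = (1 + r\<^sup>2) powr (- e)"

lemma one_plus_square_pos: "0 < 1 + (r::real)\<^sup>2"
  by (simp add: add_pos_nonneg)

lemma weight_pos: "0 < weight e r"
  using one_plus_square_pos[of r] by (simp add: weight_def)

lemma weight_minus [simp]: "weight e (- r) = weight e r"
  by (simp add: weight_def)

lemma weight_antimono: "0 \<le> e \<Longrightarrow> x\<^sup>2 \<le> y\<^sup>2 \<Longrightarrow> weight e y \<le> weight e x"
  unfolding weight_def by (rule powr_mono2') (auto simp: add_pos_nonneg)

lemma continuous_on_weight: "continuous_on UNIV (weight e)"
  unfolding weight_def using one_plus_square_pos by (intro continuous_intros) (simp add: less_le)

lemma continuous_on_times_weight: "continuous_on UNIV (\<lambda>r. r * weight e r)"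
  by (intro continuous_intros continuous_on_weight)

lemma G_s_eq: "G_s d s = oint0 (weight (expo d s))"
  unfolding G_s_def weight_def by (rule ext) simp

lemma G_s_zero [simp]: "G_s d s 0 = 0"
  by (simp add: G_s_eq)

lemma G_s_has_real_derivative: "(G_s d s has_real_derivative weight (expo d s) x) (at x)"
  unfolding G_s_eq by (rule oint0_has_real_derivative[OF continuous_on_weight])

lemma G_s_minus: "G_s d s (- x) = - G_s d s x"
  by (rule odd_primitive_of_even[OF G_s_has_real_derivative weight_minus G_s_zero])

lemma F_s_eq: "F_s d s \<rho> = \<rho> * G_s d s \<rho> - oint0 (\<lambda>r. r * weight (expo d s) r) \<rho>"
proof -
  have "(\<lambda>r. (\<rho> - r) / (1 + r\<^sup>2) powr expo d s)
      = (\<lambda>r. \<rho> * weight (expo d s) r - r * weight (expo d s) r)"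
    by (simp add: fun_eq_iff weight_def powr_minus_divide diff_divide_distrib)
  then show ?thesis
    unfolding F_s_def G_s_eq
    by (simp add: oint0_cmult_diff continuous_on_weight continuous_on_times_weight)
qed

lemma F_s_has_real_derivative: "(F_s d s has_real_derivative G_s d s x) (at x)"
proof -
  have "((\<lambda>\<rho>. \<rho> * G_s d s \<rho> - oint0 (\<lambda>r. r * weight (expo d s) r) \<rho>) has_real_derivative
      (x * weight (expo d s) x + 1 * G_s d s x) - x * weight (expo d s) x) (at x)"
    by (intro DERIV_diff DERIV_mult' DERIV_ident G_s_has_real_derivative
        oint0_has_real_derivative[OF continuous_on_times_weight])
  then show ?thesis by (simp add: F_s_eq[abs_def])
qed

lemma F_s_minus: "F_s d s (- x) = F_s d s x"
  by (rule even_primitive_of_odd[OF F_s_has_real_derivative G_s_minus])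

lemma Gt_s_eq: "Gt_s d s \<rho> = integral {0..1} (\<lambda>t. weight (expo d s) (\<rho> * t))"
  by (simp add: Gt_s_def weight_def power_mult_distrib)

lemma Gt_s_minus: "Gt_s d s (- \<rho>) = Gt_s d s \<rho>"
  by (simp add: Gt_s_def)

lemma times_Gt_s: "\<rho> * Gt_s d s \<rho> = G_s d s \<rho>"
proof -
  have "((\<lambda>t. \<rho> * weight (expo d s) (\<rho> * t)) has_integral G_s d s (\<rho> * 1) - G_s d s (\<rho> * 0)) {0..1}"
  proof (rule fundamental_theorem_of_calculus)
    fix t :: real
    have "((\<lambda>t. G_s d s (\<rho> * t)) has_real_derivative weight (expo d s) (\<rho> * t) * \<rho>) (at t)"
      by (rule DERIV_chain2[OF G_s_has_real_derivative]) (auto intro!: derivative_eq_intros)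
    then show "((\<lambda>t. G_s d s (\<rho> * t)) has_vector_derivative \<rho> * weight (expo d s) (\<rho> * t))
        (at t within {0..1})"
      by (simp add: has_real_derivative_iff_has_vector_derivative[symmetric] mult.commute
          has_field_derivative_at_within)
  qed simp
  then have "integral {0..1} (\<lambda>t. \<rho> * weight (expo d s) (\<rho> * t))
      = G_s d s (\<rho> * 1) - G_s d s (\<rho> * 0)"
    by (rule integral_unique)
  then show ?thesis unfolding Gt_s_eq by simp
qed

lemma weight_le_Gt_s:
  assumes "0 \<le> expo d s"
  shows "weight (expo d s) \<rho> \<le> Gt_s d s \<rho>"
proof -
  have "integral {0..1::real} (\<lambda>t. weight (expo d s) \<rho>)
      \<le> integral {0..1} (\<lambda>t. weight (expo d s) (\<rho> * t))"
  proof (rule integral_le)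
    show "(\<lambda>t. weight (expo d s) (\<rho> * t)) integrable_on {0..1}"
      by (intro integrable_continuous_real continuous_on_compose2[OF continuous_on_weight]
          continuous_intros) auto
    show "weight (expo d s) \<rho> \<le> weight (expo d s) (\<rho> * t)" if "t \<in> {0..1}" for t
    proof (rule weight_antimono[OF assms])
      have "\<rho>\<^sup>2 * t\<^sup>2 \<le> \<rho>\<^sup>2 * 1"
        using that by (intro mult_left_mono) (auto simp: power_le_one)
      then show "(\<rho> * t)\<^sup>2 \<le> \<rho>\<^sup>2" by (simp add: power_mult_distrib)
    qed
  qed (intro integrable_continuous_real continuous_intros)
  then show ?thesis unfolding Gt_s_eq by simp
qed

theorem mainTheorem1:
  fixes d :: nat and s r0 r1 :: real
  assumes "d \<ge> 1" and "0 < s" and "s < 1/2"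
  shows "(r1\<^sup>2 - r1 * r0) * Gt_s d s r0 \<ge> F_s d s r1 - F_s d s r0"
proof -
  have "0 \<le> expo d s" unfolding expo_def using assms by simp
  have nonneg_case: "F_s d s b - F_s d s a \<le> Gt_s d s a * (b\<^sup>2 - b * a)" if "0 \<le> a" for a b
  proof (rule second_primitive_le_quadratic
      [OF F_s_has_real_derivative G_s_has_real_derivative G_s_minus less_imp_le[OF weight_pos] _ that])
    show "weight (expo d s) y \<le> weight (expo d s) x" if "0 \<le> x" "x \<le> y" for x y
      using that by (intro weight_antimono[OF \<open>0 \<le> expo d s\<close>] power_mono)
    show "weight (expo d s) a \<le> Gt_s d s a" by (rule weight_le_Gt_s[OF \<open>0 \<le> expo d s\<close>])
    show "G_s d s a = Gt_s d s a * a" using times_Gt_s[of a] by (simp add: mult.commute)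
  qed
  show ?thesis
  proof (cases "0 \<le> r0")
    case True
    then show ?thesis using nonneg_case[of r0 r1] by (simp add: mult.commute)
  next
    case False
    then show ?thesis
      using nonneg_case[of "- r0" "- r1"] by (simp add: F_s_minus Gt_s_minus mult.commute)
  qed
qed

end
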